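(* Let $F$ be an infinite field of prime characteristic $p$, and let $q,k$ be positive integers and $n\geqslant qk$. Let $E_n$ be the natural $n$-dimensional module for $\mathrm{GL}_n(F)$ with standard basis $e_1,\dots,e_n$. Then the $\omega_{qk}$-weight space of the $F\mathrm{GL}_n(F)$-module $L^k(E_n^{\otimes q})$ has dimension $$\dim f_{qk}\bigl(L^k(E_n^{\otimes q})\bigr) = \frac{(qk)!}{k}.$$
   Context: All tensor products are over $F$, and $\mathrm{GL}_n(F)$ acts diagonally on tensor powers. For an $F$-vector space (module) $W$, $L^k(W)$ denotes the $k$th Lie power: the intersection with $W^{\otimes k}$ of the Lie subalgebra of the tensor algebra $T(W)$ (bracket $[x,y]=x\otimes y-y\otimes x$) generated by $W$. Here $W=E_n^{\otimes q}$, so $L^k(E_n^{\otimes q})$ is a $\mathrm{GL}_n(F)$-submodule of $E_n^{\otimes qk}$. For $t_1,\dots,t_n\in F^\times$ let $d(t_1,\dots,t_n)$ be the diagonal matrix with these entries. For a polynomial $\mathrm{GL}_n(F)$-module $M$ homogeneous of degree $r$ and $\alpha=(\alpha_1,\dots,\alpha_n)$ a tuple of non-negative integers summing to $r$, the weight space is $M^\alpha=\{u\in M : u\cdot d(t_1,\dots,t_n)=t_1^{\alpha_1}\cdots t_n^{\alpha_n}u \ \forall t_i\in F^\times\}$. For $r\le n$, $\omega_r=(1,\dots,1,0,\dots,0)$ with $r$ ones, and the Schur functor is $f_r(M)=M^{\omega_r}$. *)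

theory Defs
  imports Complex_Main "HOL-Computational_Algebra.Primes" "HOL-Library.Function_Algebras"
begin

text \<open>Tensors over E_n (basis e_0,...,e_{n-1}, i.e. e_{i+1} of the paper is index i)
 are represented by coefficient functions on words (lists of indices).
 The word [i_1,...,i_m] stands for the basis tensor e_{i_1} (x) ... (x) e_{i_m}.\<close>

definition tensor_space :: "nat \<Rightarrow> nat \<Rightarrow> (nat list \<Rightarrow> 'a::field) set" where
  "tensor_space n m = {u. \<forall>w. u w \<noteq> 0 \<longrightarrow> length w = m \<and> set w \<subseteq> {..<n}}"

text \<open>Multiplication of the tensor algebra T(E_n): concatenation convolution.\<close>
definition tmult :: "(nat list \<Rightarrow> 'a::field) \<Rightarrow> (nat list \<Rightarrow> 'a) \<Rightarrow> (nat list \<Rightarrow> 'a)" where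
  "tmult u v = (\<lambda>w. \<Sum>i\<le>length w. u (take i w) * v (drop i w))"

definition lie_bracket :: "(nat list \<Rightarrow> 'a::field) \<Rightarrow> (nat list \<Rightarrow> 'a) \<Rightarrow> (nat list \<Rightarrow> 'a)" where
  "lie_bracket u v = (\<lambda>w. tmult u v w - tmult v u w)"

inductive_set lie_gen :: "nat \<Rightarrow> nat \<Rightarrow> (nat list \<Rightarrow> 'a::field) set" for n q where
  gen: "x \<in> tensor_space n q \<Longrightarrow> x \<in> lie_gen n q"
| add: "x \<in> lie_gen n q \<Longrightarrow> y \<in> lie_gen n q \<Longrightarrow> (\<lambda>w. x w + y w) \<in> lie_gen n q"
| smult: "x \<in> lie_gen n q \<Longrightarrow> (\<lambda>w. c * x w) \<in> lie_gen n q"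
| brk: "x \<in> lie_gen n q \<Longrightarrow> y \<in> lie_gen n q \<Longrightarrow> lie_bracket x y \<in> lie_gen n q"

definition lie_power :: "nat \<Rightarrow> nat \<Rightarrow> nat \<Rightarrow> (nat list \<Rightarrow> 'a::field) set" where
  "lie_power n q k = lie_gen n q \<inter> tensor_space n (q * k)"

text \<open>Right action of the diagonal matrix d(t_0,...,t_{n-1}) on tensors (diagonal action).\<close>
definition act_diag :: "(nat \<Rightarrow> 'a::field) \<Rightarrow> (nat list \<Rightarrow> 'a) \<Rightarrow> (nat list \<Rightarrow> 'a)" where
  "act_diag t u = (\<lambda>w. prod_list (map t w) * u w)"

definition weight_space :: "nat \<Rightarrow> (nat list \<Rightarrow> 'a::field) set \<Rightarrow> (nat \<Rightarrow> nat) \<Rightarrow> (nat list \<Rightarrow> 'a) set" where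
  "weight_space n M \<alpha> = {u \<in> M. \<forall>t. (\<forall>i<n. t i \<noteq> 0) \<longrightarrow>
      act_diag t u = (\<lambda>w. (\<Prod>i<n. t i ^ \<alpha> i) * u w)}"

definition omega :: "nat \<Rightarrow> nat \<Rightarrow> nat" where
  "omega r = (\<lambda>i. if i < r then 1 else 0)"

definition schur_functor :: "nat \<Rightarrow> nat \<Rightarrow> (nat list \<Rightarrow> 'a::field) set \<Rightarrow> (nat list \<Rightarrow> 'a) set" where
  "schur_functor n r M = weight_space n M (omega r)"

definition tdim :: "(nat list \<Rightarrow> 'a::field) set \<Rightarrow> nat" where
  "tdim S = vector_space.dim (\<lambda>(c::'a) u. (\<lambda>w. c * u w)) S"

end

theory Submission
  imports Defs "HOL-Combinatorics.Multiset_Permutations" "HOL-Computational_Algebra.Polynomial"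
begin

text \<open>The Lie algebra generated
  by the tensors of degree \<open>q\<close> is spanned by left-normed brackets of basis tensors of degree \<open>q\<close>,
  and each such bracket is multihomogeneous: all words in its support have the same letters.
  Over an infinite field the \<open>\<omega>\<^sub>q\<^sub>k\<close>-weight space consists of the tensors supported on
  permutations of \<open>0, \<dots>, qk - 1\<close>, so it is spanned by the brackets of \<open>k\<close> basis tensors whose words
  concatenate to such a permutation. By the Jacobi identity each of them is a combination of
  brackets whose first factor is the block containing the letter \<open>0\<close>. Those are indexed by the
  permutations with \<open>0\<close> among their first \<open>q\<close> letters, and evaluated at these permutations they
  form the identity matrix. Hence the dimension is \<open>q (qk - 1)! = (qk)!/k\<close>.\<close>

interpretation tensor: vector_space "\<lambda>(c::'a::field) (u::'b \<Rightarrow> 'a) w. c * u w"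
  by unfold_locales (auto simp: fun_eq_iff algebra_simps)

lemma tensor_span_image_subset:
  assumes add: "\<And>x y. f (x + y) = f x + f y"
    and scale: "\<And>c x. f (\<lambda>w. c * x w) = (\<lambda>w. c * f x w)"
    and gens: "\<And>x. x \<in> S \<Longrightarrow> f x \<in> tensor.span T"
    and x: "x \<in> tensor.span S"
  shows "f x \<in> tensor.span T"
proof -
  have "tensor.subspace {x. f x \<in> tensor.span T}"
  proof (rule tensor.subspaceI)
    have "f 0 = 0" using add[of 0 0] by simp
    then show "0 \<in> {x. f x \<in> tensor.span T}" by (simp add: tensor.span_zero)
  qed (simp_all add: add scale tensor.span_add tensor.span_scale)
  then show ?thesis using tensor.span_induct[OF x, of "\<lambda>x. f x \<in> tensor.span T"] gens by auto
qed

lemma sum_fun_apply: "(\<Sum>a\<in>A. f a) x = (\<Sum>a\<in>A. f a x)"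
  by (induct A rule: infinite_finite_induct) auto

lemma biorthogonal_independent:
  fixes b :: "'b \<Rightarrow> 'b \<Rightarrow> 'a::field"
  assumes "\<And>i j. i \<in> I \<Longrightarrow> j \<in> I \<Longrightarrow> b i j = (if j = i then 1 else 0)"
  shows "inj_on b I" "\<not> tensor.dependent (b ` I)"
proof -
  show inj: "inj_on b I"
    by (rule inj_onI) (metis assms zero_neq_one)
  show "\<not> tensor.dependent (b ` I)"
  proof
    assume "tensor.dependent (b ` I)"
    then obtain t c v where t: "finite t" "t \<subseteq> b ` I" and sum: "(\<Sum>x\<in>t. (\<lambda>w. c x * x w)) = 0"
      and v: "v \<in> t" "c v \<noteq> 0"
      unfolding tensor.dependent_explicit by blast
    obtain i where i: "i \<in> I" "v = b i" using t v by blast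
    have ev: "x i = (if x = v then 1 else 0)" if "x \<in> t" for x
      using that t i assms by (auto dest: inj_onD[OF inj])
    then have "(\<Sum>x\<in>t. (\<lambda>w. c x * x w)) i = (\<Sum>x\<in>t. if x = v then c v else 0)"
      unfolding sum_fun_apply by (intro sum.cong refl) (simp add: ev)
    also have "\<dots> = c v" using t(1) v(1) by simp
    finally show False using sum v by simp
  qed
qed

section \<open>The tensor algebra and its Lie bracket\<close>

lemma tmult_assoc: "tmult (tmult u v) z = tmult u (tmult v z)"
proof
  fix w :: "nat list"
  define g where "g a b = u (take a w) * v (take b (drop a w)) * z (drop (a + b) w)" for a b
  have "tmult (tmult u v) z w = (\<Sum>k\<le>length w. \<Sum>i\<le>k. g i (k - i))"
    unfolding tmult_def g_def
    by (auto simp: sum_distrib_right min_def drop_take intro!: sum.cong)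
  also have "\<dots> = (\<Sum>(a, b)\<in>{(a, b). a + b \<le> length w}. g a b)"
    by (rule sum.triangle_reindex_eq[symmetric])
  also have "{(a, b). a + b \<le> length w} = Sigma {..length w} (\<lambda>a. {..length w - a})"
    by auto
  also have "(\<Sum>(a, b)\<in>\<dots>. g a b) = (\<Sum>a\<le>length w. \<Sum>b\<le>length w - a. g a b)"
    by (simp add: sum.Sigma)
  also have "\<dots> = tmult u (tmult v z) w"
    unfolding tmult_def g_def
    by (auto simp: sum_distrib_left mult.assoc add.commute intro!: sum.cong)
  finally show "tmult (tmult u v) z w = tmult u (tmult v z) w" .
qed

lemma tmult_add_left: "tmult (x + y) z = tmult x z + tmult y z"
  by (simp add: tmult_def fun_eq_iff algebra_simps sum.distrib)

lemma tmult_add_right: "tmult z (x + y) = tmult z x + tmult z y"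
  by (simp add: tmult_def fun_eq_iff algebra_simps sum.distrib)

lemma tmult_diff_left: "tmult (x - y) z = tmult x z - tmult y z"
  by (simp add: tmult_def fun_eq_iff algebra_simps sum_subtractf)

lemma tmult_diff_right: "tmult z (x - y) = tmult z x - tmult z y"
  by (simp add: tmult_def fun_eq_iff algebra_simps sum_subtractf)

lemma tmult_scale_left: "tmult (\<lambda>w. c * x w) z = (\<lambda>w. c * tmult x z w)"
  by (simp add: tmult_def fun_eq_iff algebra_simps sum_distrib_left)

lemma tmult_scale_right: "tmult z (\<lambda>w. c * x w) = (\<lambda>w. c * tmult z x w)"
  by (simp add: tmult_def fun_eq_iff algebra_simps sum_distrib_left)

lemma lie_bracket_eq: "lie_bracket u v = tmult u v - tmult v u"
  by (simp add: lie_bracket_def fun_eq_iff)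

lemma lie_bracket_add_left: "lie_bracket (x + y) z = lie_bracket x z + lie_bracket y z"
  by (simp add: lie_bracket_eq tmult_add_left tmult_add_right)

lemma lie_bracket_add_right: "lie_bracket z (x + y) = lie_bracket z x + lie_bracket z y"
  by (simp add: lie_bracket_eq tmult_add_left tmult_add_right)

lemma lie_bracket_scale_left: "lie_bracket (\<lambda>w. c * x w) z = (\<lambda>w. c * lie_bracket x z w)"
  by (simp add: lie_bracket_def tmult_scale_left tmult_scale_right algebra_simps)

lemma lie_bracket_scale_right: "lie_bracket z (\<lambda>w. c * x w) = (\<lambda>w. c * lie_bracket z x w)"
  by (simp add: lie_bracket_def tmult_scale_left tmult_scale_right algebra_simps)

lemma lie_bracket_antisym: "lie_bracket y x = - lie_bracket x y"
  by (simp add: lie_bracket_def fun_eq_iff)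

lemma lie_bracket_jacobi:
  "lie_bracket x (lie_bracket y z) = lie_bracket (lie_bracket x y) z - lie_bracket (lie_bracket x z) y"
  unfolding lie_bracket_eq tmult_diff_left tmult_diff_right tmult_assoc by (simp add: algebra_simps)

lemma foldl_lie_bracket_add: "foldl lie_bracket (x + y) zs = foldl lie_bracket x zs + foldl lie_bracket y zs"
  by (induct zs arbitrary: x y) (simp_all add: lie_bracket_add_left)

lemma foldl_lie_bracket_scale:
  "foldl lie_bracket (\<lambda>w. c * x w) zs = (\<lambda>w. c * foldl lie_bracket x zs w)"
  by (induct zs arbitrary: x) (simp_all add: lie_bracket_scale_left)

lemma foldl_lie_bracket_uminus: "foldl lie_bracket (- x) zs = - foldl lie_bracket x zs"
  using foldl_lie_bracket_scale[of "-1" x zs] by (simp add: fun_Compl_def)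

definition homogeneous :: "nat \<Rightarrow> (nat list \<Rightarrow> 'a::field) \<Rightarrow> bool" where
  "homogeneous a u \<longleftrightarrow> (\<forall>w. u w \<noteq> 0 \<longrightarrow> length w = a)"

definition multihomogeneous :: "nat multiset \<Rightarrow> (nat list \<Rightarrow> 'a::field) \<Rightarrow> bool" where
  "multihomogeneous M u \<longleftrightarrow> (\<forall>w. u w \<noteq> 0 \<longrightarrow> mset w = M)"

definition basis_tensor :: "nat list \<Rightarrow> nat list \<Rightarrow> 'a::field" where
  "basis_tensor v = (\<lambda>w. if w = v then 1 else 0)"

lemma tmult_homogeneous_left:
  assumes "homogeneous a u"
  shows "tmult u v w = (if a \<le> length w then u (take a w) * v (drop a w) else 0)"
proof -
  have "tmult u v w = (\<Sum>i\<le>length w. if i = a then u (take a w) * v (drop a w) else 0)"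
    unfolding tmult_def
  proof (rule sum.cong)
    fix i assume "i \<in> {..length w}"
    then have "length (take i w) = i" by simp
    then have "i \<noteq> a \<Longrightarrow> u (take i w) = 0" using assms unfolding homogeneous_def by metis
    then show "u (take i w) * v (drop i w) = (if i = a then u (take a w) * v (drop a w) else 0)"
      by auto
  qed simp
  then show ?thesis by (simp add: sum.delta)
qed

lemma multihomogeneous_imp_homogeneous: "multihomogeneous M u \<Longrightarrow> homogeneous (size M) u"
  unfolding multihomogeneous_def homogeneous_def by auto

lemma multihomogeneous_basis_tensor: "multihomogeneous (mset v) (basis_tensor v)"
  unfolding multihomogeneous_def basis_tensor_def by auto

lemma multihomogeneous_tmult:
  assumes "multihomogeneous A u" "multihomogeneous B v"
  shows "multihomogeneous (A + B) (tmult u v)"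
  unfolding multihomogeneous_def
proof (intro allI impI)
  fix w assume "tmult u v w \<noteq> 0"
  then obtain i where "u (take i w) * v (drop i w) \<noteq> 0"
    unfolding tmult_def using sum.not_neutral_contains_not_neutral by blast
  then have "mset (take i w) = A" "mset (drop i w) = B"
    using assms unfolding multihomogeneous_def by auto
  then show "mset w = A + B" by (metis append_take_drop_id mset_append)
qed

lemma multihomogeneous_lie_bracket:
  assumes "multihomogeneous A u" "multihomogeneous B v"
  shows "multihomogeneous (A + B) (lie_bracket u v)"
proof -
  have uv: "multihomogeneous (A + B) (tmult u v)" "multihomogeneous (A + B) (tmult v u)"
    using multihomogeneous_tmult[OF assms] multihomogeneous_tmult[OF assms(2,1)]
    by (simp_all add: add.commute)
  show ?thesis
    unfolding multihomogeneous_def lie_bracket_def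
  proof (intro allI impI)
    fix w assume "tmult u v w - tmult v u w \<noteq> 0"
    then have "tmult u v w \<noteq> 0 \<or> tmult v u w \<noteq> 0" by auto
    then show "mset w = A + B" using uv unfolding multihomogeneous_def by blast
  qed
qed

lemma multihomogeneous_left_normed:
  "multihomogeneous M x
   \<Longrightarrow> multihomogeneous (M + mset (concat vs)) (foldl lie_bracket x (map basis_tensor vs))"
proof (induct vs arbitrary: M x)
  case (Cons v vs)
  show ?case
    using Cons(1)[OF multihomogeneous_lie_bracket[OF Cons(2) multihomogeneous_basis_tensor]]
    by (simp add: add.assoc)
qed simp

lemma multihomogeneous_tensor_space:
  assumes "multihomogeneous M u" "set_mset M \<subseteq> {..<n}"
  shows "u \<in> tensor_space n (size M)"
  unfolding tensor_space_def
proof (intro CollectI allI impI)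
  fix w assume "u w \<noteq> 0"
  then have "mset w = M" using assms(1) unfolding multihomogeneous_def by blast
  then show "length w = size M \<and> set w \<subseteq> {..<n}" using assms(2) by auto
qed

definition component :: "nat multiset \<Rightarrow> (nat list \<Rightarrow> 'a::field) \<Rightarrow> (nat list \<Rightarrow> 'a)" where
  "component M u = (\<lambda>w. if mset w = M then u w else 0)"

lemma component_add: "component M (x + y) = component M x + component M y"
  by (simp add: component_def fun_eq_iff)

lemma component_scale: "component M (\<lambda>w. c * x w) = (\<lambda>w. c * component M x w)"
  by (simp add: component_def fun_eq_iff)

lemma component_multihomogeneous:
  "multihomogeneous A u \<Longrightarrow> component M u = (if A = M then u else 0)"
  unfolding multihomogeneous_def component_def by (auto simp: fun_eq_iff)

fun left_normed :: "(nat list \<Rightarrow> 'a::field) list \<Rightarrow> nat list \<Rightarrow> 'a" where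
  "left_normed [] = 0"
| "left_normed (x # xs) = foldl lie_bracket x xs"

lemma lie_bracket_left_normed_in_span:
  "lie_bracket X (foldl lie_bracket (f y) (map f ys))
     \<in> tensor.span {foldl lie_bracket X (map f \<pi>) | \<pi>. mset \<pi> = mset (y # ys)}"
proof (induct ys arbitrary: X rule: rev_induct)
  case Nil
  show ?case by (rule tensor.span_base) (auto intro: exI[of _ "[y]"])
next
  case (snoc z ys)
  let ?S = "{foldl lie_bracket X (map f \<pi>) | \<pi>. mset \<pi> = mset (y # ys @ [z])}"
  define P where "P = foldl lie_bracket (f y) (map f ys)"
  have "lie_bracket (lie_bracket X P) (f z) \<in> tensor.span ?S"
  proof (rule tensor_span_image_subset[OF _ _ _ snoc[of X, folded P_def]])
    fix u assume "u \<in> {foldl lie_bracket X (map f \<pi>) | \<pi>. mset \<pi> = mset (y # ys)}"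
    then obtain \<pi> where "u = foldl lie_bracket X (map f \<pi>)" "mset \<pi> = mset (y # ys)" by blast
    then show "lie_bracket u (f z) \<in> tensor.span ?S"
      by (intro tensor.span_base CollectI exI[of _ "\<pi> @ [z]"]) simp
  qed (simp_all only: lie_bracket_add_left lie_bracket_scale_left)
  moreover have "lie_bracket (lie_bracket X (f z)) P \<in> tensor.span ?S"
  proof (rule subsetD[OF tensor.span_mono snoc[of "lie_bracket X (f z)", folded P_def]])
    show "{foldl lie_bracket (lie_bracket X (f z)) (map f \<pi>) | \<pi>. mset \<pi> = mset (y # ys)} \<subseteq> ?S"
    proof
      fix u assume "u \<in> {foldl lie_bracket (lie_bracket X (f z)) (map f \<pi>) | \<pi>. mset \<pi> = mset (y # ys)}"
      then obtain \<pi> where "u = foldl lie_bracket (lie_bracket X (f z)) (map f \<pi>)" "mset \<pi> = mset (y # ys)"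
        by blast
      then show "u \<in> ?S" by (intro CollectI exI[of _ "z # \<pi>"]) simp
    qed
  qed
  ultimately have "lie_bracket (lie_bracket X P) (f z) - lie_bracket (lie_bracket X (f z)) P
      \<in> tensor.span ?S"
    by (rule tensor.span_diff)
  moreover have "foldl lie_bracket (f y) (map f (ys @ [z])) = lie_bracket P (f z)"
    by (simp add: P_def)
  ultimately show ?case by (simp only: lie_bracket_jacobi)
qed

lemma left_normed_in_span_starting_with:
  assumes "x \<in> set xs"
  shows "left_normed (map f xs) \<in> tensor.span {left_normed (map f (x # \<pi>)) | \<pi>. mset (x # \<pi>) = mset xs}"
    (is "_ \<in> tensor.span ?S")
proof -
  obtain as rs where xs: "xs = as @ x # rs" using split_list[OF assms] by blast
  show ?thesis
  proof (cases as)
    case Nil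
    then show ?thesis by (intro tensor.span_base) (auto simp: xs intro: exI[of _ rs])
  next
    case (Cons a as')
    define P where "P = foldl lie_bracket (f a) (map f as')"
    have "lie_bracket (f x) P \<in> tensor.span {foldl lie_bracket (f x) (map f \<pi>) | \<pi>. mset \<pi> = mset (a # as')}"
      unfolding P_def by (rule lie_bracket_left_normed_in_span)
    then have "foldl lie_bracket (lie_bracket (f x) P) (map f rs) \<in> tensor.span ?S"
    proof (rule tensor_span_image_subset[rotated 3])
      fix u assume "u \<in> {foldl lie_bracket (f x) (map f \<pi>) | \<pi>. mset \<pi> = mset (a # as')}"
      then obtain \<pi> where "u = foldl lie_bracket (f x) (map f \<pi>)" "mset \<pi> = mset (a # as')" by blast
      then show "foldl lie_bracket u (map f rs) \<in> tensor.span ?S"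
        by (intro tensor.span_base CollectI exI[of _ "\<pi> @ rs"]) (simp add: xs Cons)
    qed (simp_all only: foldl_lie_bracket_add foldl_lie_bracket_scale)
    then have "- foldl lie_bracket (lie_bracket (f x) P) (map f rs) \<in> tensor.span ?S"
      by (rule tensor.span_neg)
    moreover have "left_normed (map f xs) = foldl lie_bracket (lie_bracket P (f x)) (map f rs)"
      by (simp add: xs Cons P_def)
    moreover have "\<dots> = - foldl lie_bracket (lie_bracket (f x) P) (map f rs)"
      by (simp only: lie_bracket_antisym[of P] foldl_lie_bracket_uminus)
    ultimately show ?thesis by simp
  qed
qed

lemma left_normed_basis_tensor_eval:
  assumes "\<forall>v\<in>set vs. length v = length v0" "a \<in> set v0" "distinct (concat (v0 # vs))"
    and "a \<in> set (take (length v0) w)"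
  shows "left_normed (map basis_tensor (v0 # vs)) w = (if w = concat (v0 # vs) then 1 else 0)"
  using assms(1,3,4)
proof (induct vs arbitrary: w rule: rev_induct)
  case Nil
  then show ?case by (simp add: basis_tensor_def)
next
  case (snoc v vs)
  define G :: "nat list \<Rightarrow> 'a" where "G = left_normed (map basis_tensor (v0 # vs))"
  define c where "c = concat (v0 # vs)"
  have G: "homogeneous (length c) G"
    using multihomogeneous_imp_homogeneous[OF
        multihomogeneous_left_normed[OF multihomogeneous_basis_tensor, of v0 vs]]
    by (simp add: G_def c_def)
  have v: "homogeneous (length v) (basis_tensor v)"
    using multihomogeneous_imp_homogeneous[OF multihomogeneous_basis_tensor] by simp
  \<comment> \<open>the term \<open>e\<^sub>v \<otimes> G\<close> of the bracket vanishes: the first block of \<open>w\<close> contains \<open>a \<notin> v\<close>\<close>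
  have "a \<notin> set v" using snoc(3) assms(2) by auto
  moreover have "take (length v) w = take (length v0) w" using snoc(2) by simp
  ultimately have vw: "basis_tensor v (take (length v) w) = 0"
    using snoc(4) by (auto simp: basis_tensor_def)
  have Gw: "G (take (length c) w) = (if take (length c) w = c then 1 else 0)"
    unfolding G_def c_def
  proof (rule snoc(1))
    show "\<forall>v\<in>set vs. length v = length v0" "distinct (concat (v0 # vs))"
      using snoc(2,3) by auto
    show "a \<in> set (take (length v0) (take (length (concat (v0 # vs))) w))"
      using snoc(4) by (simp add: min_def)
  qed
  have "length c \<le> length w \<Longrightarrow> (take (length c) w = c \<and> drop (length c) w = v) \<longleftrightarrow> w = c @ v"
    by (metis append_eq_conv_conj)
  then have "lie_bracket G (basis_tensor v) w = (if w = c @ v then 1 else 0)"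
    unfolding lie_bracket_def tmult_homogeneous_left[OF G] tmult_homogeneous_left[OF v] vw Gw
    by (auto simp: basis_tensor_def)
  then show ?case by (simp add: G_def c_def)
qed

section \<open>The Lie powers are spanned by brackets of basis tensors\<close>

definition words :: "nat \<Rightarrow> nat \<Rightarrow> nat list set" where
  "words n q = {v. length v = q \<and> set v \<subseteq> {..<n}}"

definition basic_brackets :: "nat \<Rightarrow> nat \<Rightarrow> (nat list \<Rightarrow> 'a::field) set" where
  "basic_brackets n q = {left_normed (map basis_tensor (v # vs)) | v vs. set (v # vs) \<subseteq> words n q}"

lemma tensor_space_subset_span_basis:
  "tensor_space n q \<subseteq> tensor.span (basis_tensor ` words n q :: (nat list \<Rightarrow> 'a::field) set)"
proof
  fix x :: "nat list \<Rightarrow> 'a" assume x: "x \<in> tensor_space n q"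
  have fin: "finite (words n q)"
    unfolding words_def using finite_lists_length_eq[of "{..<n}" q] by (simp add: conj_commute)
  have "x = (\<Sum>v\<in>words n q. (\<lambda>w. x v * basis_tensor v w))"
  proof
    fix w
    have "(\<Sum>v\<in>words n q. (\<lambda>w. x v * basis_tensor v w)) w = (\<Sum>v\<in>words n q. if w = v then x v else 0)"
      unfolding sum_fun_apply basis_tensor_def by (rule sum.cong) auto
    also have "\<dots> = x w"
      using x fin by (auto simp: sum.delta tensor_space_def words_def)
    finally show "x w = (\<Sum>v\<in>words n q. (\<lambda>w. x v * basis_tensor v w)) w" by simp
  qed
  also have "\<dots> \<in> tensor.span (basis_tensor ` words n q)"
    by (intro tensor.span_sum tensor.span_scale tensor.span_base imageI)
  finally show "x \<in> tensor.span (basis_tensor ` words n q)" .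
qed

lemma lie_bracket_basic_brackets:
  assumes P: "P \<in> basic_brackets n q" and Q: "Q \<in> basic_brackets n q"
  shows "lie_bracket P Q \<in> tensor.span (basic_brackets n q)"
proof -
  obtain u us where P: "P = left_normed (map basis_tensor (u # us))" "set (u # us) \<subseteq> words n q"
    using P unfolding basic_brackets_def by blast
  obtain v vs where Q: "Q = left_normed (map basis_tensor (v # vs))" "set (v # vs) \<subseteq> words n q"
    using Q unfolding basic_brackets_def by blast
  have "{foldl lie_bracket P (map basis_tensor \<pi>) | \<pi>. mset \<pi> = mset (v # vs)} \<subseteq> basic_brackets n q"
  proof clarify
    fix \<pi> :: "nat list list" assume "mset \<pi> = mset (v # vs)"
    then have "set \<pi> \<subseteq> words n q" using Q(2) by (metis mset_eq_setD)
    then show "foldl lie_bracket P (map basis_tensor \<pi>) \<in> basic_brackets n q"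
      using P unfolding basic_brackets_def by (intro CollectI exI[of _ u] exI[of _ "us @ \<pi>"]) auto
  qed
  then have "tensor.span {foldl lie_bracket P (map basis_tensor \<pi>) | \<pi>. mset \<pi> = mset (v # vs)}
      \<subseteq> tensor.span (basic_brackets n q)"
    by (rule tensor.span_mono)
  then show ?thesis
    using lie_bracket_left_normed_in_span[of P basis_tensor v vs] unfolding Q(1) by auto
qed

lemma lie_bracket_span_basic_brackets:
  assumes x: "x \<in> tensor.span (basic_brackets n q)" and y: "y \<in> tensor.span (basic_brackets n q)"
  shows "lie_bracket x y \<in> tensor.span (basic_brackets n q)"
proof -
  have "lie_bracket x Q \<in> tensor.span (basic_brackets n q)" if "Q \<in> basic_brackets n q" for Q
    by (rule tensor_span_image_subset[of "\<lambda>z. lie_bracket z Q", OF _ _ lie_bracket_basic_brackets[OF _ that] x])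
      (simp_all only: lie_bracket_add_left lie_bracket_scale_left)
  then show ?thesis
    by (intro tensor_span_image_subset[of "lie_bracket x", OF _ _ _ y])
      (simp_all only: lie_bracket_add_right lie_bracket_scale_right)
qed

lemma lie_gen_subset_span_basic_brackets: "lie_gen n q \<subseteq> tensor.span (basic_brackets n q)"
proof
  fix x assume "x \<in> lie_gen n q"
  then show "x \<in> tensor.span (basic_brackets n q)"
  proof (induct rule: lie_gen.induct)
    case (gen x)
    have "basis_tensor ` words n q \<subseteq> basic_brackets n q"
      unfolding basic_brackets_def by (auto intro!: exI[where x = "[] :: nat list list"])
    then show ?case using gen tensor_space_subset_span_basis tensor.span_mono by blast
  next
    case (add x y)
    then show ?case using tensor.span_add[of x _ y] by (simp add: plus_fun_def)
  qed (auto intro: tensor.span_scale lie_bracket_span_basic_brackets)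
qed

lemma basic_brackets_subset_lie_gen: "basic_brackets n q \<subseteq> lie_gen n q"
proof -
  have "x \<in> lie_gen n q \<Longrightarrow> set vs \<subseteq> words n q \<Longrightarrow> foldl lie_bracket x (map basis_tensor vs) \<in> lie_gen n q"
    for x vs
  proof (induct vs arbitrary: x)
    case (Cons v vs)
    have "basis_tensor v \<in> lie_gen n q"
      using Cons(3) by (intro lie_gen.gen) (auto simp: tensor_space_def words_def basis_tensor_def)
    then show ?case using Cons by (auto intro: lie_gen.brk)
  qed simp
  moreover have "v \<in> words n q \<Longrightarrow> basis_tensor v \<in> lie_gen n q" for v
    by (intro lie_gen.gen) (auto simp: tensor_space_def words_def basis_tensor_def)
  ultimately show ?thesis unfolding basic_brackets_def by auto
qed

section \<open>Weight spaces over an infinite field\<close>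

lemma finite_roots_of_unity:
  assumes "d > 0" shows "finite {c::'a::field. c ^ d = 1}"
proof -
  let ?p = "monom (1::'a) d - 1"
  have "coeff ?p d = 1" using assms by (simp add: coeff_monom)
  then have "?p \<noteq> 0" by (intro notI) simp
  moreover have "{c::'a. c ^ d = 1} = {c. poly ?p c = 0}" by (simp add: poly_monom)
  ultimately show ?thesis using poly_roots_finite by metis
qed

lemma infinite_field_obtains_inj_on_power:
  assumes "infinite (UNIV :: 'a set)"
  obtains c :: "'a::field" where "c \<noteq> 0" "inj_on (\<lambda>a. c ^ a) {..m}"
proof -
  have "finite ({0} \<union> (\<Union>d\<in>{1..m}. {c::'a. c ^ d = 1}))"
    by (auto intro!: finite_roots_of_unity)
  then obtain c where c: "c \<notin> {0} \<union> (\<Union>d\<in>{1..m}. {c::'a. c ^ d = 1})"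
    using ex_new_if_finite[OF assms] by blast
  have "a = b" if "a \<le> b" "b \<le> m" "c ^ a = c ^ b" for a b
  proof (rule ccontr)
    assume "a \<noteq> b"
    then have "b - a \<in> {1..m}" using that by auto
    then have "c ^ (b - a) \<noteq> 1" using c by blast
    moreover have "c ^ b = c ^ a * c ^ (b - a)" using that(1) by (simp flip: power_add)
    ultimately show False using that(3) c by auto
  qed
  then have "inj_on (\<lambda>a. c ^ a) {..m}"
    by (intro inj_onI) (metis atMost_iff nat_le_linear)
  with c show ?thesis using that by blast
qed

text \<open>Evaluate the weight condition at the diagonal matrix with a single entry \<open>c\<close>, whose powers
  separate the possible exponents.\<close>
lemma weight_space_count:
  fixes u :: "nat list \<Rightarrow> 'a::field"
  assumes "infinite (UNIV :: 'a set)" "u \<in> weight_space n M \<alpha>" "u w \<noteq> 0" "j < n"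
  shows "count (mset w) j = \<alpha> j"
proof -
  obtain c :: 'a where c: "c \<noteq> 0" "inj_on (\<lambda>a. c ^ a) {..max (length w) (\<alpha> j)}"
    using infinite_field_obtains_inj_on_power[OF assms(1)] by blast
  define t where "t = (\<lambda>i. if i = j then c else 1)"
  have "act_diag t u = (\<lambda>w. (\<Prod>i<n. t i ^ \<alpha> i) * u w)"
    using assms(2) c(1) unfolding weight_space_def t_def by auto
  then have "prod_list (map t w) = (\<Prod>i<n. t i ^ \<alpha> i)"
    using assms(3) unfolding act_diag_def by (metis mult_cancel_right)
  moreover have "prod_list (map t w) = c ^ count (mset w) j"
    unfolding t_def by (induct w) auto
  moreover have "(\<Prod>i<n. t i ^ \<alpha> i) = (\<Prod>i<n. if i = j then c ^ \<alpha> j else 1)"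
    by (rule prod.cong) (auto simp: t_def)
  moreover have "\<dots> = c ^ \<alpha> j" using assms(4) by (simp add: prod.delta')
  moreover have "count (mset w) j \<le> length w" using count_le_size[of "mset w" j] by simp
  ultimately show ?thesis using c(2) by (auto dest: inj_onD)
qed

lemma mset_eq_upt_iff: "mset w = mset [0..<m] \<longleftrightarrow> distinct w \<and> set w = {..<m}"
  by (metis atLeast0LessThan distinct_upt set_eq_iff_mset_eq_distinct set_upt mset_eq_imp_distinct_iff mset_eq_setD)

lemma omega_weight_support:
  fixes u :: "nat list \<Rightarrow> 'a::field"
  assumes "infinite (UNIV :: 'a set)" "u \<in> weight_space n M (omega m)"
    and "M \<subseteq> tensor_space n m" "m \<le> n" "u w \<noteq> 0"
  shows "mset w = mset [0..<m]"
proof (rule multiset_eqI)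
  fix j
  have "u \<in> tensor_space n m" using assms(2,3) unfolding weight_space_def by blast
  then have "set w \<subseteq> {..<n}" using assms(5) unfolding tensor_space_def by blast
  then show "count (mset w) j = count (mset [0..<m]) j"
    using weight_space_count[OF assms(1,2,5), of j] assms(4)
    by (cases "j < n") (auto simp: omega_def count_mset_0_iff)
qed

lemma multihomogeneous_in_weight_space:
  fixes u :: "nat list \<Rightarrow> 'a::field"
  assumes "multihomogeneous (mset [0..<m]) u" "m \<le> n" "u \<in> M"
  shows "u \<in> weight_space n M (omega m)"
proof -
  have "act_diag t u w = (\<Prod>i<n. t i ^ omega m i) * u w" for t :: "nat \<Rightarrow> 'a" and w
  proof (cases "u w = 0")
    case False
    then have "mset w = mset [0..<m]" using assms(1) unfolding multihomogeneous_def by blast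
    then have "prod_list (map t w) = prod_list (map t [0..<m])"
      by (metis mset_map prod_mset_prod_list)
    also have "\<dots> = (\<Prod>i<m. t i)" by (simp add: prod.distinct_set_conv_list[symmetric] atLeast0LessThan)
    also have "\<dots> = (\<Prod>i<n. t i ^ omega m i)"
      using assms(2) by (intro prod.mono_neutral_cong_left) (auto simp: omega_def)
    finally show ?thesis by (simp add: act_diag_def)
  qed (simp add: act_diag_def)
  then show ?thesis using assms(3) unfolding weight_space_def by auto
qed

section \<open>Counting permutations with a prescribed letter in a prefix\<close>

definition insert_at :: "nat \<Rightarrow> 'b \<Rightarrow> 'b list \<Rightarrow> 'b list" where
  "insert_at i x xs = take i xs @ x # drop i xs"

lemma insert_at_inject:
  assumes "x \<notin> set xs" "x \<notin> set ys" "i \<le> length xs" "j \<le> length ys"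
    and "insert_at i x xs = insert_at j x ys"
  shows "i = j \<and> xs = ys"
proof -
  have "x \<notin> set (take i xs)" "x \<notin> set (drop i xs)" "x \<notin> set (take j ys)" "x \<notin> set (drop j ys)"
    using assms(1,2) by (auto dest: in_set_takeD in_set_dropD)
  then have "take i xs = take j ys" "drop i xs = drop j ys"
    using assms(5) unfolding insert_at_def by (simp_all add: append_Cons_eq_iff)
  then show ?thesis using assms(3,4) by (metis append_take_drop_id length_take min_absorb2)
qed

lemma mset_insert_at: "mset (insert_at i x xs) = mset (x # xs)"
  unfolding insert_at_def by (subst (3) append_take_drop_id[symmetric, of xs i]) (simp del: append_take_drop_id)

lemma set_insert_at: "set (insert_at i x xs) = insert x (set xs)"
  using mset_eq_setD[OF mset_insert_at] by simp

lemma distinct_insert_at: "distinct (insert_at i x xs) \<longleftrightarrow> x \<notin> set xs \<and> distinct xs"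
  using mset_eq_imp_distinct_iff[OF mset_insert_at] by simp

lemma insert_at_in_take: "i < q \<Longrightarrow> i \<le> length xs \<Longrightarrow> x \<in> set (take q (insert_at i x xs))"
  unfolding insert_at_def by (simp add: min_def take_Cons')

definition perms_zero_in_prefix :: "nat \<Rightarrow> nat \<Rightarrow> nat list set" where
  "perms_zero_in_prefix q m = {w. mset w = mset [0..<m] \<and> 0 \<in> set (take q w)}"

lemma bij_betw_insert_zero:
  assumes "q \<le> m"
  shows "bij_betw (\<lambda>(i, xs). insert_at i 0 xs)
           ({..<q} \<times> permutations_of_set {1..<m}) (perms_zero_in_prefix q m)"
proof -
  have perm: "0 \<notin> set xs \<and> length xs = m - 1" if "xs \<in> permutations_of_set {1..<m}" for xs
    using that distinct_card[of xs] by (auto simp: permutations_of_set_def)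
  have "i = j \<and> xs = ys"
    if "i < q" "xs \<in> permutations_of_set {1..<m}" "j < q" "ys \<in> permutations_of_set {1..<m}"
      and "insert_at i 0 xs = insert_at j 0 ys" for i j xs ys
    using that perm[OF that(2)] perm[OF that(4)] assms by (intro insert_at_inject) auto
  then have "inj_on (\<lambda>(i, xs). insert_at i 0 xs) ({..<q} \<times> permutations_of_set {1..<m})"
    by (auto intro!: inj_onI)
  moreover have "(\<lambda>(i, xs). insert_at i 0 xs) ` ({..<q} \<times> permutations_of_set {1..<m})
      \<subseteq> perms_zero_in_prefix q m"
  proof clarify
    fix i xs assume i: "i < q" and xs: "xs \<in> permutations_of_set {1..<m}"
    have "0 < m" using i assms by simp
    then have "set (insert_at i 0 xs) = {..<m}"
      using xs by (auto simp: set_insert_at permutations_of_set_def atLeast1_lessThan_eq_remove0)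
    moreover have "distinct (insert_at i 0 xs)"
      using xs by (simp add: distinct_insert_at permutations_of_set_def)
    moreover have "0 \<in> set (take q (insert_at i 0 xs))" using i assms perm[OF xs] by (intro insert_at_in_take) auto
    ultimately show "insert_at i 0 xs \<in> perms_zero_in_prefix q m"
      unfolding perms_zero_in_prefix_def mem_Collect_eq mset_eq_upt_iff by blast
  qed
  moreover have "perms_zero_in_prefix q m
      \<subseteq> (\<lambda>(i, xs). insert_at i 0 xs) ` ({..<q} \<times> permutations_of_set {1..<m})"
  proof
    fix w assume "w \<in> perms_zero_in_prefix q m"
    then have w: "distinct w" "set w = {..<m}" "0 \<in> set (take q w)"
      unfolding perms_zero_in_prefix_def mem_Collect_eq mset_eq_upt_iff by blast+
    then obtain ys zs where yz: "w = ys @ 0 # zs" "0 \<notin> set ys"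
      using split_list_first[of 0 w] by (auto dest: in_set_takeD)
    have "length ys < q"
    proof (rule ccontr)
      assume "\<not> length ys < q"
      then have "take q w = take q ys" by (simp add: yz)
      then show False using w(3) yz(2) by (auto dest: in_set_takeD)
    qed
    moreover have "ys @ zs \<in> permutations_of_set {1..<m}"
    proof -
      have "set (ys @ zs) = set w - {0}" using w(1) yz by auto
      also have "\<dots> = {1..<m}" by (simp add: w(2) atLeast1_lessThan_eq_remove0)
      finally show ?thesis using w(1) yz(1) by (simp add: permutations_of_set_def)
    qed
    moreover have "w = insert_at (length ys) 0 (ys @ zs)" by (simp add: yz insert_at_def)
    ultimately show "w \<in> (\<lambda>(i, xs). insert_at i 0 xs) ` ({..<q} \<times> permutations_of_set {1..<m})"
      by force
  qed
  ultimately show ?thesis unfolding bij_betw_def by blast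
qed

lemma card_perms_zero_in_prefix: "q \<le> m \<Longrightarrow> card (perms_zero_in_prefix q m) = q * fact (m - 1)"
  using bij_betw_same_card[OF bij_betw_insert_zero] by (simp add: card_cartesian_product)

section \<open>A basis of the \<open>\<omega>\<close>-weight space\<close>

fun chunks :: "nat \<Rightarrow> nat \<Rightarrow> 'b list \<Rightarrow> 'b list list" where
  "chunks q 0 w = []"
| "chunks q (Suc k) w = take q w # chunks q k (drop q w)"

lemma concat_chunks: "length w = q * k \<Longrightarrow> concat (chunks q k w) = w"
  by (induct k arbitrary: w) auto

lemma length_chunks: "length w = q * k \<Longrightarrow> v \<in> set (chunks q k w) \<Longrightarrow> length v = q"
proof (induct k arbitrary: w)
  case (Suc k)
  then show ?case using Suc(1)[of "drop q w"] by auto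
qed simp

lemma chunks_concat: "\<forall>v\<in>set vs. length v = q \<Longrightarrow> chunks q (length vs) (concat vs) = vs"
  by (induct vs) auto

lemma mset_concat_eq: "mset xs = mset ys \<Longrightarrow> mset (concat xs) = mset (concat ys)"
  by (metis mset_concat mset_map sum_mset_sum_list)

lemma length_concat_const: "\<forall>v\<in>set vs. length v = q \<Longrightarrow> length (concat vs) = q * length vs"
  by (induct vs) auto

definition block_bracket :: "nat \<Rightarrow> nat \<Rightarrow> nat list \<Rightarrow> nat list \<Rightarrow> 'a::field" where
  "block_bracket q k w = left_normed (map basis_tensor (chunks q k w))"

lemma chunks_perms_zero_in_prefix:
  assumes "w \<in> perms_zero_in_prefix q (q * k)" "k > 0"
  obtains vs where "chunks q k w = take q w # vs" "\<forall>v\<in>set vs. length v = q"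
    "concat (take q w # vs) = w" "length (take q w) = q"
proof -
  have "mset w = mset [0..<q * k]" using assms(1) unfolding perms_zero_in_prefix_def by blast
  then have "length w = length [0..<q * k]" by (rule mset_eq_length)
  then have len: "length w = q * k" by simp
  obtain k' where k: "k = Suc k'" using assms(2) by (cases k) auto
  have split: "chunks q k w = take q w # chunks q k' (drop q w)" by (simp add: k)
  show ?thesis
  proof (rule that[OF split])
    show "\<forall>v\<in>set (chunks q k' (drop q w)). length v = q"
    proof
      fix v assume "v \<in> set (chunks q k' (drop q w))"
      then have "v \<in> set (chunks q k w)" by (simp add: split)
      then show "length v = q" by (rule length_chunks[OF len])
    qed
    show "concat (take q w # chunks q k' (drop q w)) = w" using concat_chunks[OF len] split by simp
    show "length (take q w) = q" using len k by simp
  qed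
qed

lemma block_bracket_eval:
  assumes "w \<in> perms_zero_in_prefix q (q * k)" "k > 0" "0 \<in> set (take q w')"
  shows "block_bracket q k w w' = (if w' = w then 1 else 0)"
proof -
  obtain vs where vs: "chunks q k w = take q w # vs" "\<forall>v\<in>set vs. length v = q"
    "concat (take q w # vs) = w" "length (take q w) = q"
    using chunks_perms_zero_in_prefix[OF assms(1,2)] by blast
  have "0 \<in> set (take q w)" "distinct (concat (take q w # vs))"
    using assms(1) vs(3) unfolding perms_zero_in_prefix_def mem_Collect_eq mset_eq_upt_iff by simp_all
  then have "left_normed (map basis_tensor (take q w # vs)) w' = (if w' = w then 1 else 0)"
    using left_normed_basis_tensor_eval[of vs "take q w" 0 w'] vs(2-4) assms(3) by simp
  then show ?thesis by (simp add: block_bracket_def vs(1))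
qed

lemma block_bracket_concat:
  "\<forall>v\<in>set vs. length v = q \<Longrightarrow> block_bracket q (length vs) (concat vs) = left_normed (map basis_tensor vs)"
  by (simp add: block_bracket_def chunks_concat)

lemma block_bracket_in_schur_functor:
  assumes "w \<in> perms_zero_in_prefix q (q * k)" "k > 0" "q * k \<le> n"
  shows "block_bracket q k w \<in> schur_functor n (q * k) (lie_power n q k)"
proof -
  obtain vs where vs: "chunks q k w = take q w # vs" "\<forall>v\<in>set vs. length v = q"
    "concat (take q w # vs) = w" "length (take q w) = q"
    using chunks_perms_zero_in_prefix[OF assms(1,2)] by blast
  have w: "mset w = mset [0..<q * k]" using assms(1) unfolding perms_zero_in_prefix_def by blast
  then have "set w = {0..<q * k}" using mset_eq_setD by fastforce
  then have "set w \<subseteq> {..<n}" using assms(3) by auto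
  then have "set (concat (take q w # vs)) \<subseteq> {..<n}" using vs(3) by simp
  then have "set (take q w # vs) \<subseteq> words n q"
    using vs(2,4) unfolding words_def by auto
  then have "block_bracket q k w \<in> lie_gen n q"
    using basic_brackets_subset_lie_gen unfolding basic_brackets_def block_bracket_def vs(1) by blast
  moreover have hom: "multihomogeneous (mset [0..<q * k]) (block_bracket q k w)"
    using multihomogeneous_left_normed[OF multihomogeneous_basis_tensor, of "take q w" vs] vs(3) w
    by (simp add: block_bracket_def vs(1) flip: mset_append)
  moreover have "block_bracket q k w \<in> tensor_space n (q * k)"
  proof -
    have "{0..<q * k} \<subseteq> {..<n}" using assms(3) by auto
    then show ?thesis using multihomogeneous_tensor_space[OF hom, of n] by simp
  qed
  ultimately show ?thesis
    unfolding schur_functor_def lie_power_def by (intro multihomogeneous_in_weight_space[OF hom assms(3)]) simp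
qed

lemma left_normed_in_block_brackets:
  assumes "\<forall>v\<in>set (v0 # vs). length v = q" "mset (concat (v0 # vs)) = mset [0..<q * k]"
    and "0 \<in> set v0" "q > 0"
  shows "left_normed (map basis_tensor (v0 # vs)) \<in> block_bracket q k ` perms_zero_in_prefix q (q * k)"
proof -
  have "q * length (v0 # vs) = q * k"
    using length_concat_const[OF assms(1)] mset_eq_length[OF assms(2)] by simp
  then have "length (v0 # vs) = k" using assms(4) by (metis mult_left_cancel neq0_conv)
  then have "block_bracket q k (concat (v0 # vs)) = left_normed (map basis_tensor (v0 # vs))"
    using block_bracket_concat[OF assms(1)] by metis
  moreover have "concat (v0 # vs) \<in> perms_zero_in_prefix q (q * k)"
    using assms(1-3) unfolding perms_zero_in_prefix_def by simp
  ultimately show ?thesis by (metis image_eqI)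
qed

text \<open>Only brackets whose letters are a permutation of \<open>0, \<dots>, q k - 1\<close> contribute to the
  \<open>\<omega>\<close>-weight space; rotate the block containing \<open>0\<close> to the front.\<close>
lemma basic_bracket_component_in_span:
  assumes "L \<in> basic_brackets n q" "q > 0" "k > 0"
  shows "component (mset [0..<q * k]) L \<in> tensor.span (block_bracket q k ` perms_zero_in_prefix q (q * k))"
    (is "_ \<in> tensor.span ?B")
proof -
  obtain vs where L: "L = left_normed (map basis_tensor vs)" "vs \<noteq> []" "set vs \<subseteq> words n q"
    using assms(1) unfolding basic_brackets_def by blast
  have hom: "multihomogeneous (mset (concat vs)) L"
    using multihomogeneous_left_normed[OF multihomogeneous_basis_tensor] L(1,2)
    by (cases vs) (simp_all flip: mset_append)
  show ?thesis
  proof (cases "mset (concat vs) = mset [0..<q * k]")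
    case False
    then show ?thesis by (simp add: component_multihomogeneous[OF hom] tensor.span_zero)
  next
    case True
    have "set (concat vs) = {0..<q * k}" using mset_eq_setD[OF True] by simp
    then have "0 \<in> set (concat vs)" using assms(2,3) by simp
    then obtain v0 where v0: "v0 \<in> set vs" "0 \<in> set v0" by auto
    have "{left_normed (map basis_tensor (v0 # \<pi>)) | \<pi>. mset (v0 # \<pi>) = mset vs} \<subseteq> ?B"
    proof clarify
      fix \<pi> assume \<pi>: "mset (v0 # \<pi>) = mset vs"
      have "\<forall>v\<in>set (v0 # \<pi>). length v = q"
        using L(3) mset_eq_setD[OF \<pi>] unfolding words_def by auto
      moreover have "mset (concat (v0 # \<pi>)) = mset [0..<q * k]"
        using mset_concat_eq[OF \<pi>] True by simp
      ultimately show "left_normed (map basis_tensor (v0 # \<pi>)) \<in> ?B"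
        using left_normed_in_block_brackets v0(2) assms(2) by blast
    qed
    then have "L \<in> tensor.span ?B"
      using left_normed_in_span_starting_with[OF v0(1), of basis_tensor] L(1) tensor.span_mono by blast
    then show ?thesis by (simp add: component_multihomogeneous[OF hom] True)
  qed
qed

lemma schur_functor_subset_span_block_brackets:
  assumes "infinite (UNIV :: 'a::field set)" "q > 0" "k > 0" "q * k \<le> n"
  shows "schur_functor n (q * k) (lie_power n q k :: (nat list \<Rightarrow> 'a) set)
           \<subseteq> tensor.span (block_bracket q k ` perms_zero_in_prefix q (q * k))"
proof
  fix u :: "nat list \<Rightarrow> 'a" assume u: "u \<in> schur_functor n (q * k) (lie_power n q k)"
  then have "u \<in> tensor.span (basic_brackets n q)"
    using lie_gen_subset_span_basic_brackets
    unfolding schur_functor_def weight_space_def lie_power_def by blast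
  then have "component (mset [0..<q * k]) u \<in> tensor.span (block_bracket q k ` perms_zero_in_prefix q (q * k))"
    by (rule tensor_span_image_subset[OF component_add component_scale
          basic_bracket_component_in_span[OF _ assms(2,3)], rotated])
  moreover have "component (mset [0..<q * k]) u = u"
    using omega_weight_support[OF assms(1) u[unfolded schur_functor_def] _ assms(4)]
    unfolding component_def lie_power_def by (auto simp: fun_eq_iff)
  ultimately show "u \<in> tensor.span (block_bracket q k ` perms_zero_in_prefix q (q * k))" by simp
qed

theorem lemma3p3:
  fixes p q k n :: nat
  assumes "prime p"
    and "CHAR('a::field) = p"
    and "infinite (UNIV :: 'a set)"
    and "q > 0" and "k > 0" and "n \<ge> q * k"
  shows "tdim (schur_functor n (q * k) (lie_power n q k :: (nat list \<Rightarrow> 'a) set))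
           = fact (q * k) div k"
proof -
  let ?P = "perms_zero_in_prefix q (q * k)"
  let ?B = "block_bracket q k ` ?P :: (nat list \<Rightarrow> 'a) set"
  have eval: "block_bracket q k w w' = (if w' = w then (1::'a) else 0)" if "w \<in> ?P" "w' \<in> ?P" for w w'
    using block_bracket_eval[OF that(1) assms(5)] that(2) unfolding perms_zero_in_prefix_def by blast
  have "tdim (schur_functor n (q * k) (lie_power n q k) :: (nat list \<Rightarrow> 'a) set) = card ?B"
    unfolding tdim_def
  proof (rule tensor.basis_card_eq_dim[symmetric])
    show "?B \<subseteq> schur_functor n (q * k) (lie_power n q k)"
      using block_bracket_in_schur_functor assms(5,6) by blast
    show "schur_functor n (q * k) (lie_power n q k) \<subseteq> tensor.span ?B"
      by (rule schur_functor_subset_span_block_brackets[OF assms(3-6)])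
    show "\<not> tensor.dependent ?B" by (rule biorthogonal_independent(2)[OF eval])
  qed
  also have "\<dots> = card ?P" by (rule card_image[OF biorthogonal_independent(1)[OF eval]])
  also have "\<dots> = q * fact (q * k - 1)" using assms(5) by (simp add: card_perms_zero_in_prefix)
  also have "\<dots> = fact (q * k) div k"
    using assms(4,5) by (simp add: fact_reduce[of "q * k"])
  finally show ?thesis .
qed

end
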